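(* Let $\mathcal{X}$ be a finite set, let $p_1,\ldots,p_t$ and $q_1,\ldots,q_l$ be probability distributions on $\mathcal{X}$, and let $0\le \epsilon_{ij}\le 1$ for $i\in[t]$, $j\in[l]$. Then there is a function $f:\mathcal{X}\to[0,1]$ such that (1) for all $i\in[t]$, $\sum_x p_i(x) f(x)\ \ge\ 1-\sum_{j=1}^l \epsilon_{ij}$; (2) for all $j\in[l]$, $\sum_x q_j(x) f(x)\ \le\ \sum_{i=1}^t 2^{-D^{\epsilon_{ij}}_H(p_i\|q_j)}$.
   Context: For probability distributions $p,q$ on a finite set $\Omega$ and $0\le\epsilon\le 1$, the classical hypothesis testing relative entropy is $D^\epsilon_H(p\|q):=\max_{f}\,-\log_2\sum_\omega f(\omega)q(\omega)$, where the maximum is over all functions $f:\Omega\to[0,1]$ with $\sum_\omega f(\omega)p(\omega)\ge 1-\epsilon$. *)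

theory Defs
  imports Complex_Main "HOL-Library.Extended_Real"
begin

definition prob_dist :: "('a::finite \<Rightarrow> real) \<Rightarrow> bool" where
  "prob_dist p \<longleftrightarrow> (\<forall>x. 0 \<le> p x) \<and> (\<Sum>x\<in>UNIV. p x) = 1"

definition test_feasible :: "('a::finite \<Rightarrow> real) \<Rightarrow> real \<Rightarrow> ('a \<Rightarrow> real) \<Rightarrow> bool" where
  "test_feasible p \<epsilon> f \<longleftrightarrow> (\<forall>x. 0 \<le> f x \<and> f x \<le> 1) \<and> (\<Sum>x\<in>UNIV. f x * p x) \<ge> 1 - \<epsilon>"

definition D_H :: "real \<Rightarrow> ('a::finite \<Rightarrow> real) \<Rightarrow> ('a \<Rightarrow> real) \<Rightarrow> ereal" where
  "D_H \<epsilon> p q = (SUP f \<in> {f. test_feasible p \<epsilon> f}.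
      (let s = (\<Sum>x\<in>UNIV. f x * q x) in if s = 0 then \<infinity> else ereal (- log 2 s)))"

definition pow2neg :: "ereal \<Rightarrow> real" where
  "pow2neg d = (case d of ereal r \<Rightarrow> 2 powr (- r) | PInfty \<Rightarrow> 0 | MInfty \<Rightarrow> 0)"

end

theory Submission
  imports Defs "HOL-Analysis.Analysis"
begin

text \<open>For each pair (i, j) take an optimal test for p_i against q_j; it exists by compactness and
  its type-II error is exactly 2^(-D_H). The combined test f = min(1, min_j \<Sum>_i F_ij) has type-II
  error against q_j at most \<Sum>_i of those errors, while 1 - f \<le> \<Sum>_j (1 - F_ij) for every i,
  so the type-I errors add up by a union bound.\<close>

lemma continuous_on_sum_times:
  "continuous_on A (\<lambda>f::'a::finite \<Rightarrow> real. \<Sum>x\<in>UNIV. f x * q x)"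
  by (intro continuous_intros continuous_on_subset[OF continuous_on_product_coordinates]) auto

lemma compact_test_feasible: "compact {f. test_feasible p e f}"
proof -
  have "compactin (product_topology (\<lambda>_. euclidean) UNIV) (PiE UNIV (\<lambda>_::'a. {0..1::real}))"
    by (subst compactin_PiE) auto
  then have "compact (PiE UNIV (\<lambda>_::'a. {0..1::real}))"
    by (simp add: euclidean_product_topology compactin_euclidean_iff)
  moreover have "closed {f. 1 - e \<le> (\<Sum>x\<in>UNIV. f x * p x)}"
    by (intro closed_Collect_le continuous_intros continuous_on_sum_times)
  ultimately have "compact (PiE UNIV (\<lambda>_. {0..1}) \<inter> {f. 1 - e \<le> (\<Sum>x\<in>UNIV. f x * p x)})"
    by (rule compact_Int_closed)
  also have "PiE UNIV (\<lambda>_. {0..1}) \<inter> {f. 1 - e \<le> (\<Sum>x\<in>UNIV. f x * p x)} = {f. test_feasible p e f}"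
    by (auto simp: test_feasible_def PiE_def)
  finally show ?thesis .
qed

lemma optimal_test_exists:
  fixes p q :: "'a::finite \<Rightarrow> real"
  assumes "1 - e \<le> (\<Sum>x\<in>UNIV. p x)"
  obtains f where "test_feasible p e f"
    and "\<And>g. test_feasible p e g \<Longrightarrow> (\<Sum>x\<in>UNIV. f x * q x) \<le> (\<Sum>x\<in>UNIV. g x * q x)"
proof -
  have "test_feasible p e (\<lambda>_. 1)"
    using assms by (simp add: test_feasible_def)
  then have "{f. test_feasible p e f} \<noteq> {}" by blast
  from continuous_attains_inf[OF compact_test_feasible this continuous_on_sum_times]
  show ?thesis using that by blast
qed

lemma pow2neg_D_H_optimal_test:
  fixes p q :: "'a::finite \<Rightarrow> real"
  assumes q: "\<And>x. 0 \<le> q x" and f: "test_feasible p e f"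
    and opt: "\<And>g. test_feasible p e g \<Longrightarrow> (\<Sum>x\<in>UNIV. f x * q x) \<le> (\<Sum>x\<in>UNIV. g x * q x)"
  shows "pow2neg (D_H e p q) = (\<Sum>x\<in>UNIV. f x * q x)"
proof -
  define v where "v = (\<lambda>s::real. if s = 0 then \<infinity> else ereal (- log 2 s))"
  define s where "s = (\<Sum>x\<in>UNIV. f x * q x)"
  have "0 \<le> s"
    using f q unfolding s_def test_feasible_def by (intro sum_nonneg) auto
  have v_mono: "v s' \<le> v s" if "s \<le> s'" for s'
    using that \<open>0 \<le> s\<close> by (auto simp: v_def)
  have "D_H e p q = (SUP g \<in> {g. test_feasible p e g}. v (\<Sum>x\<in>UNIV. g x * q x))"
    unfolding D_H_def v_def Let_def ..
  also have "\<dots> = v s"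
  proof (rule antisym)
    show "(SUP g \<in> {g. test_feasible p e g}. v (\<Sum>x\<in>UNIV. g x * q x)) \<le> v s"
      using opt by (intro SUP_least v_mono) (simp add: s_def)
    show "v s \<le> (SUP g \<in> {g. test_feasible p e g}. v (\<Sum>x\<in>UNIV. g x * q x))"
      using f by (intro SUP_upper2[of f]) (auto simp: s_def)
  qed
  finally show ?thesis
    using \<open>0 \<le> s\<close> by (auto simp: v_def pow2neg_def s_def[symmetric])
qed

lemma test_attaining_pow2neg_D_H:
  fixes p q :: "'a::finite \<Rightarrow> real"
  assumes "prob_dist p" "prob_dist q" "0 \<le> e"
  obtains f where "test_feasible p e f" "(\<Sum>x\<in>UNIV. f x * q x) = pow2neg (D_H e p q)"
proof -
  have "1 - e \<le> (\<Sum>x\<in>UNIV. p x)" "\<And>x. 0 \<le> q x"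
    using assms by (auto simp: prob_dist_def)
  then obtain f where f: "test_feasible p e f"
    and opt: "\<And>g. test_feasible p e g \<Longrightarrow> (\<Sum>x\<in>UNIV. f x * q x) \<le> (\<Sum>x\<in>UNIV. g x * q x)"
    using optimal_test_exists by blast
  show ?thesis
    using that[OF f] pow2neg_D_H_optimal_test[OF \<open>\<And>x. 0 \<le> q x\<close> f opt] by simp
qed

lemma Min_column_sums_bounds:
  fixes a :: "nat \<Rightarrow> nat \<Rightarrow> real"
  assumes a: "\<And>i j. i < t \<Longrightarrow> j < l \<Longrightarrow> 0 \<le> a i j \<and> a i j \<le> 1"
  defines "m \<equiv> Min (insert 1 ((\<lambda>j. \<Sum>i<t. a i j) ` {..<l}))"
  shows "0 \<le> m" "m \<le> 1"
    and "\<And>j. j < l \<Longrightarrow> m \<le> (\<Sum>i<t. a i j)"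
    and "\<And>i. i < t \<Longrightarrow> 1 - m \<le> (\<Sum>j<l. 1 - a i j)"
proof -
  show "0 \<le> m" "m \<le> 1" "\<And>j. j < l \<Longrightarrow> m \<le> (\<Sum>i<t. a i j)"
    using a unfolding m_def by (auto simp: Min_le_iff Min_ge_iff intro!: sum_nonneg)
  fix i assume i: "i < t"
  have nonneg: "0 \<le> (\<Sum>j<l. 1 - a i j)"
    using a i by (intro sum_nonneg) auto
  have "m \<in> insert 1 ((\<lambda>j. \<Sum>i<t. a i j) ` {..<l})"
    unfolding m_def by (intro Min_in) auto
  then show "1 - m \<le> (\<Sum>j<l. 1 - a i j)"
  proof
    assume "m = 1" then show ?thesis using nonneg by simp
  next
    assume "m \<in> (\<lambda>j. \<Sum>i<t. a i j) ` {..<l}"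
    then obtain j where j: "j < l" "m = (\<Sum>i<t. a i j)" by auto
    have "a i j \<le> m"
      unfolding j(2) using a i j(1) by (intro member_le_sum) auto
    then have "1 - m \<le> 1 - a i j" by simp
    also have "\<dots> \<le> (\<Sum>j<l. 1 - a i j)"
      using a i j(1) by (intro member_le_sum) auto
    finally show ?thesis .
  qed
qed

lemma union_bound_type_I:
  fixes p f :: "'a::finite \<Rightarrow> real" and g :: "nat \<Rightarrow> 'a \<Rightarrow> real"
  assumes p: "prob_dist p"
    and f: "\<And>x. 1 - f x \<le> (\<Sum>j<l. 1 - g j x)"
    and g: "\<And>j. j < l \<Longrightarrow> 1 - e j \<le> (\<Sum>x\<in>UNIV. g j x * p x)"
  shows "1 - (\<Sum>j<l. e j) \<le> (\<Sum>x\<in>UNIV. p x * f x)"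
proof -
  have p0: "\<And>x. 0 \<le> p x" and p1: "(\<Sum>x\<in>UNIV. p x) = 1"
    using p by (auto simp: prob_dist_def)
  have "1 - (\<Sum>x\<in>UNIV. p x * f x) = (\<Sum>x\<in>UNIV. p x * (1 - f x))"
    using p1 by (simp add: algebra_simps sum_subtractf)
  also have "\<dots> \<le> (\<Sum>x\<in>UNIV. p x * (\<Sum>j<l. 1 - g j x))"
    using p0 f by (intro sum_mono mult_left_mono) auto
  also have "\<dots> = (\<Sum>j<l. 1 - (\<Sum>x\<in>UNIV. g j x * p x))"
    using p1 by (simp add: sum_distrib_left sum.swap[of _ UNIV] algebra_simps sum_subtractf
        flip: sum_distrib_left)
  also have "\<dots> \<le> (\<Sum>j<l. e j)"
    using g by (intro sum_mono) (simp add: algebra_simps)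
  finally show ?thesis by simp
qed

lemma weighted_sum_le_sum_bounds:
  fixes q f :: "'a::finite \<Rightarrow> real" and g :: "nat \<Rightarrow> 'a \<Rightarrow> real"
  assumes q: "\<And>x. 0 \<le> q x"
    and f: "\<And>x. f x \<le> (\<Sum>i<t. g i x)"
    and g: "\<And>i. i < t \<Longrightarrow> (\<Sum>x\<in>UNIV. g i x * q x) \<le> b i"
  shows "(\<Sum>x\<in>UNIV. q x * f x) \<le> (\<Sum>i<t. b i)"
proof -
  have "(\<Sum>x\<in>UNIV. q x * f x) \<le> (\<Sum>x\<in>UNIV. q x * (\<Sum>i<t. g i x))"
    using q f by (intro sum_mono mult_left_mono) auto
  also have "\<dots> = (\<Sum>i<t. \<Sum>x\<in>UNIV. g i x * q x)"
    by (simp add: sum_distrib_left sum.swap[of _ UNIV] algebra_simps)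
  also have "\<dots> \<le> (\<Sum>i<t. b i)"
    using g by (intro sum_mono) auto
  finally show ?thesis .
qed

lemma tests_attaining_pow2neg_D_H:
  fixes p q :: "nat \<Rightarrow> 'a::finite \<Rightarrow> real" and eps :: "nat \<Rightarrow> nat \<Rightarrow> real"
  assumes "\<forall>i<t. prob_dist (p i)" "\<forall>j<l. prob_dist (q j)" "\<forall>i<t. \<forall>j<l. 0 \<le> eps i j"
  obtains F where "\<And>i j. i < t \<Longrightarrow> j < l \<Longrightarrow> test_feasible (p i) (eps i j) (F i j)"
    and "\<And>i j. i < t \<Longrightarrow> j < l \<Longrightarrow>
      (\<Sum>x\<in>UNIV. F i j x * q j x) = pow2neg (D_H (eps i j) (p i) (q j))"
proof -
  define P where "P i j g \<longleftrightarrow> test_feasible (p i) (eps i j) g \<and>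
      (\<Sum>x\<in>UNIV. g x * q j x) = pow2neg (D_H (eps i j) (p i) (q j))" for i j g
  have ex: "\<exists>g. P i j g" if ij: "i < t" "j < l" for i j
  proof -
    obtain g where "test_feasible (p i) (eps i j) g"
        "(\<Sum>x\<in>UNIV. g x * q j x) = pow2neg (D_H (eps i j) (p i) (q j))"
      by (rule test_attaining_pow2neg_D_H[of "p i" "q j" "eps i j"]) (use assms ij in auto)
    then show ?thesis unfolding P_def by blast
  qed
  define F where "F i j = (SOME g. P i j g)" for i j
  have "P i j (F i j)" if "i < t" "j < l" for i j
    unfolding F_def using ex[OF that] by (rule someI_ex)
  then show ?thesis
    using that[of F] unfolding P_def by blast
qed

lemma combine_tests:
  fixes p q :: "nat \<Rightarrow> 'a::finite \<Rightarrow> real" and F :: "nat \<Rightarrow> nat \<Rightarrow> 'a \<Rightarrow> real"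
  assumes p: "\<forall>i<t. prob_dist (p i)" and q: "\<forall>j<l. \<forall>x. 0 \<le> q j x"
    and F: "\<And>i j. i < t \<Longrightarrow> j < l \<Longrightarrow> test_feasible (p i) (eps i j) (F i j)"
    and b: "\<And>i j. i < t \<Longrightarrow> j < l \<Longrightarrow> (\<Sum>x\<in>UNIV. F i j x * q j x) \<le> b i j"
  shows "\<exists>f :: 'a \<Rightarrow> real. (\<forall>x. 0 \<le> f x \<and> f x \<le> 1)
    \<and> (\<forall>i<t. (\<Sum>x\<in>UNIV. p i x * f x) \<ge> 1 - (\<Sum>j<l. eps i j))
    \<and> (\<forall>j<l. (\<Sum>x\<in>UNIV. q j x * f x) \<le> (\<Sum>i<t. b i j))"
proof -
  define f where "f x = Min (insert 1 ((\<lambda>j. \<Sum>i<t. F i j x) ` {..<l}))" for x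
  have bounds: "0 \<le> f x" "f x \<le> 1" "\<And>j. j < l \<Longrightarrow> f x \<le> (\<Sum>i<t. F i j x)"
      "\<And>i. i < t \<Longrightarrow> 1 - f x \<le> (\<Sum>j<l. 1 - F i j x)" for x
    unfolding f_def using Min_column_sums_bounds[of t l "\<lambda>i j. F i j x"] F
    by (auto simp: test_feasible_def)
  show ?thesis
  proof (intro exI conjI allI impI)
    show "0 \<le> f x" "f x \<le> 1" for x using bounds by auto
  next
    fix i assume i: "i < t"
    show "1 - (\<Sum>j<l. eps i j) \<le> (\<Sum>x\<in>UNIV. p i x * f x)"
    proof (rule union_bound_type_I)
      show "prob_dist (p i)" using p i by blast
      show "1 - f x \<le> (\<Sum>j<l. 1 - F i j x)" for x using bounds(4) i .
      show "1 - eps i j \<le> (\<Sum>x\<in>UNIV. F i j x * p i x)" if "j < l" for j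
        using F[OF i that] by (simp add: test_feasible_def)
    qed
  next
    fix j assume j: "j < l"
    show "(\<Sum>x\<in>UNIV. q j x * f x) \<le> (\<Sum>i<t. b i j)"
    proof (rule weighted_sum_le_sum_bounds)
      show "0 \<le> q j x" for x using q j by blast
      show "f x \<le> (\<Sum>i<t. F i j x)" for x using bounds(3) j .
      show "(\<Sum>x\<in>UNIV. F i j x * q j x) \<le> b i j" if "i < t" for i
        using b[OF that j] .
    qed
  qed
qed

theorem fact1:
  fixes p :: "nat \<Rightarrow> 'a::finite \<Rightarrow> real" and q :: "nat \<Rightarrow> 'a \<Rightarrow> real"
    and t l :: nat and eps :: "nat \<Rightarrow> nat \<Rightarrow> real"
  assumes "\<forall>i<t. prob_dist (p i)"
    and "\<forall>j<l. prob_dist (q j)"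
    and "\<forall>i<t. \<forall>j<l. 0 \<le> eps i j \<and> eps i j \<le> 1"
  shows "\<exists>f :: 'a \<Rightarrow> real. (\<forall>x. 0 \<le> f x \<and> f x \<le> 1)
    \<and> (\<forall>i<t. (\<Sum>x\<in>UNIV. p i x * f x) \<ge> 1 - (\<Sum>j<l. eps i j))
    \<and> (\<forall>j<l. (\<Sum>x\<in>UNIV. q j x * f x) \<le> (\<Sum>i<t. pow2neg (D_H (eps i j) (p i) (q j))))"
proof -
  obtain F where F: "\<And>i j. i < t \<Longrightarrow> j < l \<Longrightarrow> test_feasible (p i) (eps i j) (F i j)"
    and err: "\<And>i j. i < t \<Longrightarrow> j < l \<Longrightarrow>
      (\<Sum>x\<in>UNIV. F i j x * q j x) = pow2neg (D_H (eps i j) (p i) (q j))"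
    by (rule tests_attaining_pow2neg_D_H[of t p l q eps]) (use assms in auto)
  have q: "\<forall>j<l. \<forall>x. 0 \<le> q j x"
    using assms(2) by (simp add: prob_dist_def)
  show ?thesis
    by (rule combine_tests[OF assms(1) q F eq_refl[OF err]])
qed

end
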